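(* Let $A$ be an $n\times n$ matrix over $\mathbb{Z}_4+u\mathbb{Z}_4$ such that $A^T=A$. Then the code over $\mathbb{Z}_4+u\mathbb{Z}_4$ generated by the matrix $[I_n\,|\,A]$ is a formally self-dual code of length $2n$.
   Context: $\mathbb{Z}_4+u\mathbb{Z}_4$ is the commutative ring of characteristic $4$ with $u^2=0$. A linear code of length $N$ is a submodule of $(\mathbb{Z}_4+u\mathbb{Z}_4)^N$; its dual is taken with respect to the Euclidean inner product $\sum_i x_iy_i$ in the ring. The Lee weight on $\mathbb{Z}_4+u\mathbb{Z}_4$ is $w_L(a+ub)=w_L(b)+w_L(a+b)$, where the Lee weight on $\mathbb{Z}_4$ is $0,1,2,1$ for $0,1,2,3$, extended additively to vectors. A linear code is formally self-dual if it has the same Lee weight enumerator as its dual. *)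

theory Defs
  imports Main "HOL-Library.Numeral_Type" "HOL-Library.Product_Plus"
begin

text \<open>The ring Z4 + u Z4 (u^2 = 0): the element a + u b is represented by the pair (a, b)
  with a, b :: 4 (integers mod 4). Addition is componentwise (Product_Plus), so the
  additive identity is (0,0) and finite sums are taken componentwise.\<close>

type_synonym zu4 = "4 \<times> 4"

definition zu_mul :: "zu4 \<Rightarrow> zu4 \<Rightarrow> zu4" where
  "zu_mul x y = (fst x * fst y, fst x * snd y + snd x * fst y)"

definition zu_one :: zu4 where "zu_one = (1, 0)"

definition lee_z4 :: "4 \<Rightarrow> nat" where
  "lee_z4 x = (if x = 0 then 0 else if x = 2 then 2 else 1)"

definition lee_zu :: "zu4 \<Rightarrow> nat" where
  "lee_zu x = lee_z4 (snd x) + lee_z4 (fst x + snd x)"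

definition lee_weight :: "zu4 list \<Rightarrow> nat" where
  "lee_weight v = sum_list (map lee_zu v)"

definition generated_code :: "nat \<Rightarrow> nat \<Rightarrow> (nat \<Rightarrow> nat \<Rightarrow> zu4) \<Rightarrow> zu4 list set" where
  "generated_code k N G =
     {map (\<lambda>j. \<Sum>i<k. zu_mul (c i) (G i j)) [0..<N] | c. True}"

definition dual_code :: "nat \<Rightarrow> zu4 list set \<Rightarrow> zu4 list set" where
  "dual_code N C = {y. length y = N \<and> (\<forall>x\<in>C. (\<Sum>i<N. zu_mul (x ! i) (y ! i)) = 0)}"

text \<open>Lee weight enumerator, given by its coefficients: number of codewords of Lee weight w.\<close>
definition lee_enum :: "zu4 list set \<Rightarrow> nat \<Rightarrow> nat" where
  "lee_enum C w = card {c \<in> C. lee_weight c = w}"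

definition formally_self_dual :: "nat \<Rightarrow> zu4 list set \<Rightarrow> bool" where
  "formally_self_dual N C \<longleftrightarrow> lee_enum C = lee_enum (dual_code N C)"

definition gen_IA :: "nat \<Rightarrow> (nat \<Rightarrow> nat \<Rightarrow> zu4) \<Rightarrow> nat \<Rightarrow> nat \<Rightarrow> zu4" where
  "gen_IA n A i j = (if j < n then (if i = j then zu_one else 0) else A i (j - n))"

end

theory Submission
  imports Defs
begin

text \<open>Writing codewords of the code generated by [I | A] as (c, cA), every word of the form
  (-cA, c) is orthogonal to all codewords because A is symmetric, and testing a dual word
  (x, y) against the codewords (e_j, e_j A) shows x = -yA, so these are all of the dual. The map (x, y) \<mapsto> (-y, x) is therefore a
  bijection from the code onto its dual; since the Lee weight is invariant under negation,
  it preserves Lee weights, so both codes have the same Lee weight enumerator.\<close>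

lemma z4_cases: "(x::4) = 0 \<or> x = 1 \<or> x = 2 \<or> x = 3"
proof (cases x rule: bit0_cases)
  case (of_int z)
  then have "z = 0 \<or> z = 1 \<or> z = 2 \<or> z = 3" by auto
  with of_int show ?thesis by auto
qed

lemma lee_z4_uminus: "lee_z4 (- x) = lee_z4 x"
  using z4_cases[of x] by (auto simp: lee_z4_def)

lemma lee_zu_uminus: "lee_zu (- x) = lee_zu x"
proof -
  have "- fst x + - snd x = - (fst x + snd x)" by simp
  then show ?thesis by (simp only: lee_zu_def fst_uminus snd_uminus lee_z4_uminus)
qed

lemma lee_weight_conv_sum: "lee_weight v = (\<Sum>j<length v. lee_zu (v ! j))"
  by (simp add: lee_weight_def sum_list_sum_nth atLeast0LessThan)

lemma lee_enum_image:
  assumes "inj_on f C" and "\<And>x. x \<in> C \<Longrightarrow> lee_weight (f x) = lee_weight x"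
  shows "lee_enum (f ` C) = lee_enum C"
proof
  fix w
  have "{y \<in> f ` C. lee_weight y = w} = f ` {x \<in> C. lee_weight x = w}"
    using assms(2) by force
  moreover have "inj_on f {x \<in> C. lee_weight x = w}"
    using assms(1) by (rule inj_on_subset) auto
  ultimately show "lee_enum (f ` C) w = lee_enum C w"
    by (simp add: lee_enum_def card_image)
qed

lemma zu_mul_commute: "zu_mul x y = zu_mul y x"
  by (simp add: zu_mul_def algebra_simps)

lemma zu_mul_assoc: "zu_mul (zu_mul x y) z = zu_mul x (zu_mul y z)"
  by (simp add: zu_mul_def algebra_simps)

lemma zu_mul_zero [simp]: "zu_mul x 0 = 0" "zu_mul 0 x = 0"
  by (simp_all add: zu_mul_def zero_prod_def)

lemma zu_mul_one [simp]: "zu_mul x zu_one = x" "zu_mul zu_one x = x"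
  by (simp_all add: zu_mul_def zu_one_def)

lemma zu_mul_add_right: "zu_mul x (y + z) = zu_mul x y + zu_mul x z"
  by (simp add: zu_mul_def algebra_simps)

lemma zu_mul_add_left: "zu_mul (y + z) x = zu_mul y x + zu_mul z x"
  by (simp add: zu_mul_def algebra_simps)

lemma zu_mul_uminus_right: "zu_mul x (- y) = - zu_mul x y"
  by (simp add: zu_mul_def algebra_simps)

lemma zu_mul_sum_right: "zu_mul x (sum f S) = (\<Sum>i\<in>S. zu_mul x (f i))"
  by (induct S rule: infinite_finite_induct) (simp_all add: zu_mul_add_right)

lemma zu_mul_sum_left: "zu_mul (sum f S) x = (\<Sum>i\<in>S. zu_mul (f i) x)"
  by (induct S rule: infinite_finite_induct) (simp_all add: zu_mul_add_left)

lemma sum_lessThan_add_split: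
  "(\<Sum>j<n + m. f j) = (\<Sum>j<n. f j) + (\<Sum>j<m. f (n + j))" for f :: "nat \<Rightarrow> 'a::comm_monoid_add"
  by (induct m) (simp_all add: add.assoc)

definition vec_mat_mul :: "nat \<Rightarrow> (nat \<Rightarrow> zu4) \<Rightarrow> (nat \<Rightarrow> nat \<Rightarrow> zu4) \<Rightarrow> nat \<Rightarrow> zu4" where
  "vec_mat_mul n c A j = (\<Sum>k<n. zu_mul (c k) (A k j))"

definition systematic_word :: "nat \<Rightarrow> (nat \<Rightarrow> nat \<Rightarrow> zu4) \<Rightarrow> (nat \<Rightarrow> zu4) \<Rightarrow> zu4 list" where
  "systematic_word n A c = map (\<lambda>j. if j < n then c j else vec_mat_mul n c A (j - n)) [0..<2 * n]"

definition swap_halves_neg :: "nat \<Rightarrow> zu4 list \<Rightarrow> zu4 list" where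
  "swap_halves_neg n v = map (\<lambda>j. if j < n then - v ! (n + j) else v ! (j - n)) [0..<2 * n]"

lemma length_systematic_word [simp]: "length (systematic_word n A c) = 2 * n"
  by (simp add: systematic_word_def)

lemma length_swap_halves_neg [simp]: "length (swap_halves_neg n v) = 2 * n"
  by (simp add: swap_halves_neg_def)

lemma vec_mat_mul_unit:
  assumes "i < n"
  shows "vec_mat_mul n (\<lambda>k. if k = i then zu_one else 0) A j = A i j"
proof -
  have "vec_mat_mul n (\<lambda>k. if k = i then zu_one else 0) A j = (\<Sum>k<n. if k = i then A i j else 0)"
    unfolding vec_mat_mul_def by (rule sum.cong) auto
  then show ?thesis using assms by simp
qed

lemma vec_mat_mul_symmetric:
  assumes "\<forall>i<n. \<forall>j<n. A i j = A j i"
  shows "(\<Sum>i<n. zu_mul (d i) (vec_mat_mul n c A i)) = (\<Sum>j<n. zu_mul (vec_mat_mul n d A j) (c j))"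
proof -
  have "(\<Sum>i<n. zu_mul (d i) (vec_mat_mul n c A i))
      = (\<Sum>i<n. \<Sum>k<n. zu_mul (d i) (zu_mul (c k) (A k i)))"
    by (simp add: vec_mat_mul_def zu_mul_sum_right)
  also have "\<dots> = (\<Sum>i<n. \<Sum>k<n. zu_mul (zu_mul (d i) (A i k)) (c k))"
    using assms by (intro sum.cong refl) (metis lessThan_iff zu_mul_assoc zu_mul_commute)
  also have "\<dots> = (\<Sum>k<n. \<Sum>i<n. zu_mul (zu_mul (d i) (A i k)) (c k))"
    by (rule sum.swap)
  also have "\<dots> = (\<Sum>j<n. zu_mul (vec_mat_mul n d A j) (c j))"
    by (simp add: vec_mat_mul_def zu_mul_sum_left)
  finally show ?thesis .
qed

lemma generated_code_gen_IA: "generated_code n (2 * n) (gen_IA n A) = range (systematic_word n A)"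
proof -
  have "(\<Sum>i<n. zu_mul (c i) (gen_IA n A i j)) = c j" if "j < n" for c j
  proof -
    have "(\<Sum>i<n. zu_mul (c i) (gen_IA n A i j)) = (\<Sum>i<n. if i = j then c j else 0)"
      by (rule sum.cong) (auto simp: gen_IA_def that)
    then show ?thesis using that by simp
  qed
  then have "map (\<lambda>j. \<Sum>i<n. zu_mul (c i) (gen_IA n A i j)) [0..<2 * n] = systematic_word n A c" for c
    by (auto simp: systematic_word_def gen_IA_def vec_mat_mul_def)
  then show ?thesis unfolding generated_code_def by auto
qed

lemma inner_systematic_word:
  "(\<Sum>i<2 * n. zu_mul (systematic_word n A c ! i) (y ! i))
     = (\<Sum>i<n. zu_mul (c i) (y ! i)) + (\<Sum>j<n. zu_mul (vec_mat_mul n c A j) (y ! (n + j)))"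
  unfolding mult_2 sum_lessThan_add_split by (simp add: systematic_word_def)

lemma swap_halves_neg_systematic_word:
  "swap_halves_neg n (systematic_word n A c)
     = map (\<lambda>j. if j < n then - vec_mat_mul n c A j else c (j - n)) [0..<2 * n]"
  by (auto simp: swap_halves_neg_def systematic_word_def)

lemma dual_code_systematic:
  assumes sym: "\<forall>i<n. \<forall>j<n. A i j = A j i"
  shows "dual_code (2 * n) (range (systematic_word n A))
           = swap_halves_neg n ` range (systematic_word n A)"
proof
  show "swap_halves_neg n ` range (systematic_word n A) \<subseteq> dual_code (2 * n) (range (systematic_word n A))"
  proof (clarsimp simp: dual_code_def)
    fix c d
    have "(\<Sum>i<2 * n. zu_mul (systematic_word n A d ! i) (swap_halves_neg n (systematic_word n A c) ! i))
        = - (\<Sum>i<n. zu_mul (d i) (vec_mat_mul n c A i)) + (\<Sum>j<n. zu_mul (vec_mat_mul n d A j) (c j))"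
      unfolding inner_systematic_word
      by (simp add: swap_halves_neg_systematic_word zu_mul_uminus_right sum_negf)
    then show "(\<Sum>i<2 * n. zu_mul (systematic_word n A d ! i) (swap_halves_neg n (systematic_word n A c) ! i)) = 0"
      by (simp add: vec_mat_mul_symmetric[OF sym])
  qed
next
  show "dual_code (2 * n) (range (systematic_word n A)) \<subseteq> swap_halves_neg n ` range (systematic_word n A)"
  proof
    fix y assume "y \<in> dual_code (2 * n) (range (systematic_word n A))"
    then have len: "length y = 2 * n"
      and orth: "\<And>c. (\<Sum>i<2 * n. zu_mul (systematic_word n A c ! i) (y ! i)) = 0"
      by (auto simp: dual_code_def)
    define d where "d k = y ! (n + k)" for k
    have "y ! j = - vec_mat_mul n d A j" if "j < n" for j
    proof -
      define e where "e = (\<lambda>i. if i = j then zu_one else 0)"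
      have "(\<Sum>i<n. zu_mul (e i) (y ! i)) = (\<Sum>i<n. if i = j then y ! j else 0)"
        by (rule sum.cong) (auto simp: e_def)
      then have first: "(\<Sum>i<n. zu_mul (e i) (y ! i)) = y ! j"
        using that by simp
      have unit: "vec_mat_mul n e A k = A j k" for k
        unfolding e_def using that by (rule vec_mat_mul_unit)
      have "(\<Sum>k<n. zu_mul (vec_mat_mul n e A k) (y ! (n + k))) = (\<Sum>k<n. zu_mul (d k) (A k j))"
      proof (rule sum.cong[OF refl])
        fix k assume "k \<in> {..<n}"
        then have "A j k = A k j" using sym that by auto
        then show "zu_mul (vec_mat_mul n e A k) (y ! (n + k)) = zu_mul (d k) (A k j)"
          unfolding unit d_def by (metis zu_mul_commute)
      qed
      then have "y ! j + vec_mat_mul n d A j = 0"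
        using orth[of e] first by (simp add: inner_systematic_word vec_mat_mul_def)
      then show ?thesis by (simp add: eq_neg_iff_add_eq_0)
    qed
    then have "y = swap_halves_neg n (systematic_word n A d)"
      using len by (intro nth_equalityI) (auto simp: swap_halves_neg_systematic_word d_def)
    then show "y \<in> swap_halves_neg n ` range (systematic_word n A)" by blast
  qed
qed

lemma lee_weight_swap_halves_neg:
  assumes "length v = 2 * n"
  shows "lee_weight (swap_halves_neg n v) = lee_weight v"
proof -
  have "lee_weight (swap_halves_neg n v) = (\<Sum>j<n. lee_zu (v ! (n + j))) + (\<Sum>j<n. lee_zu (v ! j))"
    unfolding lee_weight_conv_sum
    by (simp add: swap_halves_neg_def mult_2 sum_lessThan_add_split lee_zu_uminus)
  also have "\<dots> = lee_weight v"
    unfolding lee_weight_conv_sum assms mult_2 sum_lessThan_add_split by simp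
  finally show ?thesis .
qed

lemma inj_on_swap_halves_neg: "inj_on (swap_halves_neg n) {v. length v = 2 * n}"
proof (rule inj_onI, simp)
  fix v w assume eq: "swap_halves_neg n v = swap_halves_neg n w"
    and len: "length v = 2 * n" "length w = 2 * n"
  have "v ! j = w ! j" if "j < 2 * n" for j
  proof (cases "j < n")
    case True
    then show ?thesis using arg_cong[OF eq, of "\<lambda>u. u ! (n + j)"] by (simp add: swap_halves_neg_def)
  next
    case False
    then have "j - n < n" using that by arith
    with False have "- v ! j = - w ! j"
      using arg_cong[OF eq, of "\<lambda>u. u ! (j - n)"] by (simp add: swap_halves_neg_def)
    then show ?thesis by simp
  qed
  with len show "v = w" by (simp add: nth_equalityI)
qed

theorem theorem5p1:
  fixes n :: nat and A :: "nat \<Rightarrow> nat \<Rightarrow> zu4"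
  assumes "\<forall>i<n. \<forall>j<n. A i j = A j i"
  shows "(\<forall>c \<in> generated_code n (2 * n) (gen_IA n A). length c = 2 * n)
         \<and> formally_self_dual (2 * n) (generated_code n (2 * n) (gen_IA n A))"
proof -
  let ?C = "range (systematic_word n A)"
  have "inj_on (swap_halves_neg n) ?C"
    by (rule inj_on_subset[OF inj_on_swap_halves_neg]) auto
  then have "lee_enum (swap_halves_neg n ` ?C) = lee_enum ?C"
    by (rule lee_enum_image) (auto simp: lee_weight_swap_halves_neg)
  then show ?thesis
    unfolding generated_code_gen_IA formally_self_dual_def dual_code_systematic[OF assms] by simp
qed

end
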